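(* Let $\Omega$ be a planar triangle mesh with vertices $w_1,\dots,w_n\in\mathbb{C}$ and face set $\mathcal{F}$, and let $\mu$ be a piecewise constant Beltrami coefficient on $\Omega$, i.e. $\mu|_T=\mu_T=\rho_T+i\tau_T\in\mathbb{C}$ with $|\mu_T|<1$ for every face $T\in\mathcal{F}$. For $u,v\in\mathbb{R}^n$ define the discrete least-squares quasi-conformal energy $$E_{QC}^{\mu}(u,v)=\frac12\sum_{T\in\mathcal{F}}\operatorname{Area}(T)\,\big\|P_T\nabla u|_T+JP_T\nabla v|_T\big\|^2 .$$ Then the solution of the equation $E_{QC}^{\mu}(u,v)=0$ is unique up to scaling, rotation and translation: there exists $f_0\in\mathbb{C}^n$ such that, identifying $(u,v)$ with $f=u+iv\in\mathbb{C}^n$ (where $f_j=u_j+iv_j$ is the image of $w_j$), the set of all solutions is exactly $\{a f_0+b\mathbf{1}: a,b\in\mathbb{C}\}$, where $\mathbf{1}=(1,\dots,1)^T$.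
   Context: The mesh $\Omega$ is a connected triangulated planar domain whose faces are nondegenerate, consistently (positively) oriented triangles. A vector $u\in\mathbb{R}^n$ is identified with the continuous function on $\Omega$ that is linear on each face and takes value $u_j$ at $w_j$; on a face $T$ this function has constant gradient $\nabla u|_T\in\mathbb{R}^2$ (explicitly, if $T=[w_0^T,w_1^T,w_2^T]$ with values $u_0,u_1,u_2$, then $\nabla u|_T=\frac{1}{2\operatorname{Area}(T)}\begin{pmatrix}0&-1\\1&0\end{pmatrix}\sum_{i=0}^2u_i(w^T_{i+2}-w^T_{i+1})$ with indices mod 3 and points of $\mathbb{C}$ viewed as vectors in $\mathbb{R}^2$); similarly for $v$. On each face, $$P_T=\frac{1}{\sqrt{1-|\mu_T|^2}}\begin{pmatrix}1-\rho_T&-\tau_T\\-\tau_T&1+\rho_T\end{pmatrix},\qquad J=\begin{pmatrix}0&-1\\1&0\end{pmatrix}.$$ Vanishing of this energy is the discrete form of the Beltrami equation $f_{\bar z}=\mu f_z$ for the piecewise linear map $f=u+iv$. *)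

theory Defs
  imports "HOL-Analysis.Analysis"
begin

text \<open>Vertices are the elements of a finite type 'n (so vectors in C^n are functions
 'n \<Rightarrow> complex); a face is an ordered triple of vertices [w0,w1,w2].\<close>

type_synonym 'n face = "'n \<times> 'n \<times> 'n"

definition face_verts :: "'n face \<Rightarrow> 'n set" where
  "face_verts T = (case T of (i, j, k) \<Rightarrow> {i, j, k})"

definition tri_area :: "('n \<Rightarrow> complex) \<Rightarrow> 'n face \<Rightarrow> real" where
  "tri_area w T = (case T of (i, j, k) \<Rightarrow> Im (cnj (w j - w i) * (w k - w i)) / 2)"

text \<open>Gradient of the piecewise linear interpolant of u on face T:
  (1/(2 Area T)) J (sum u_i (w_{i+2} - w_{i+1})), a vector in R^2 as a pair.\<close>
definition pl_grad :: "('n \<Rightarrow> complex) \<Rightarrow> 'n face \<Rightarrow> ('n \<Rightarrow> real) \<Rightarrow> real \<times> real" where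
  "pl_grad w T u = (case T of (i, j, k) \<Rightarrow>
     (let S = complex_of_real (u i) * (w k - w j) + complex_of_real (u j) * (w i - w k)
              + complex_of_real (u k) * (w j - w i);
          A = tri_area w T
      in (- Im S / (2 * A), Re S / (2 * A))))"

definition Jrot :: "real \<times> real \<Rightarrow> real \<times> real" where
  "Jrot p = (- snd p, fst p)"

definition Pmat :: "complex \<Rightarrow> real \<times> real \<Rightarrow> real \<times> real" where
  "Pmat m p = (let \<rho> = Re m; \<tau> = Im m; c = 1 / sqrt (1 - (cmod m)^2)
               in (c * ((1 - \<rho>) * fst p - \<tau> * snd p), c * (- \<tau> * fst p + (1 + \<rho>) * snd p)))"

definition sqnorm2 :: "real \<times> real \<Rightarrow> real" where
  "sqnorm2 p = (fst p)^2 + (snd p)^2"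

definition E_QC :: "('n \<Rightarrow> complex) \<Rightarrow> 'n face set \<Rightarrow> ('n face \<Rightarrow> complex)
                    \<Rightarrow> ('n \<Rightarrow> real) \<Rightarrow> ('n \<Rightarrow> real) \<Rightarrow> real" where
  "E_QC w F mu u v = 1/2 * (\<Sum>T\<in>F. tri_area w T *
       sqnorm2 (Pmat (mu T) (pl_grad w T u) + Jrot (Pmat (mu T) (pl_grad w T v))))"

definition face_adj :: "'n face \<Rightarrow> 'n face \<Rightarrow> bool" where
  "face_adj T T' \<longleftrightarrow> card (face_verts T \<inter> face_verts T') \<ge> 2"

definition planar_mesh :: "('n::finite \<Rightarrow> complex) \<Rightarrow> 'n face set \<Rightarrow> bool" where
  "planar_mesh w F \<longleftrightarrow>
     inj w \<and>
     (\<forall>T\<in>F. tri_area w T > 0) \<and>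
     (\<forall>T\<in>F. \<forall>T'\<in>F. T \<noteq> T' \<longrightarrow>
        interior (convex hull (w ` face_verts T)) \<inter> interior (convex hull (w ` face_verts T')) = {}) \<and>
     (\<forall>x. \<exists>T\<in>F. x \<in> face_verts T) \<and>
     (\<forall>T\<in>F. \<forall>T'\<in>F. (T, T') \<in> {(A, B). A \<in> F \<and> B \<in> F \<and> face_adj A B}\<^sup>*)"

end

theory Submission
  imports Defs
begin

(* On a face T the energy term equals |L_T f|^2 / (4 Area(T) (1 - |mu_T|^2)), where
   L_T f = sum_i f_i (e_i + mu_T cnj e_i) is a complex-linear form in the vertex values and
   e_i is the edge opposite to vertex i. So the solutions are the common zeros of the forms L_T,
   a complex linear space containing the constants. As |mu_T| < 1 and e_i is nonzero, all three
   coefficients of L_T are nonzero: a solution vanishing at two vertices of a face vanishes on the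
   whole face, hence by edge-connectivity on the whole mesh. A solution is thus determined by its
   values at two vertices, and the solution space is spanned by 1 and a single further solution. *)

lemma ex_generator_if_determined_by_two_values:
  fixes S :: "('a \<Rightarrow> 'b::field) set"
  assumes closed: "\<And>f g a b c. f \<in> S \<Longrightarrow> g \<in> S \<Longrightarrow> (\<lambda>x. a * f x + b * g x + c) \<in> S"
    and "S \<noteq> {}"
    and determined: "\<And>f. f \<in> S \<Longrightarrow> f p = 0 \<Longrightarrow> f q = 0 \<Longrightarrow> f = (\<lambda>_. 0)"
  shows "\<exists>f0. S = {(\<lambda>x. a * f0 x + b) | a b. True}"
proof -
  \<comment> \<open>If all elements of S agree at p and q, then S consists of the constants and f0 = 0 serves.\<close>
  obtain f0 where f0: "f0 \<in> S" "f0 p = 0" and f0q: "f0 q = 1 \<or> (\<forall>f\<in>S. f p = f q)"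
  proof (cases "\<exists>g\<in>S. g p \<noteq> g q")
    case True
    then obtain g where "g \<in> S" "g p \<noteq> g q" by blast
    then show thesis
      using that[of "\<lambda>x. (g x - g p) / (g q - g p)"]
        closed[of g g "1 / (g q - g p)" 0 "- g p / (g q - g p)"]
      by (simp add: diff_divide_distrib)
  next
    case False
    obtain g where "g \<in> S" using \<open>S \<noteq> {}\<close> by blast
    then show thesis
      using that[of "\<lambda>_. 0"] closed[of g g 0 0 0] False by auto
  qed
  have repr: "f = (\<lambda>x. (f q - f p) * f0 x + f p)" if "f \<in> S" for f
  proof -
    let ?h = "\<lambda>x. 1 * f x + (- (f q - f p)) * f0 x + (- f p)"
    have "?h \<in> S" using closed[OF that f0(1)] .
    moreover have "?h p = 0" "?h q = 0" using f0 f0q that by auto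
    ultimately have h: "?h = (\<lambda>_. 0)" by (rule determined)
    show ?thesis
    proof
      fix x
      show "f x = (f q - f p) * f0 x + f p"
        using fun_cong[OF h, of x] by (simp add: algebra_simps)
    qed
  qed
  have span: "(\<lambda>x. a * f0 x + b) \<in> S" for a b
    using closed[OF f0(1) f0(1), of a 0 b] by simp
  have "S = {(\<lambda>x. a * f0 x + b) | a b. True}"
  proof (intro equalityI subsetI)
    show "f \<in> {(\<lambda>x. a * f0 x + b) | a b. True}" if "f \<in> S" for f
      using repr[OF that] by blast
    show "f \<in> S" if "f \<in> {(\<lambda>x. a * f0 x + b) | a b. True}" for f
      using that span by blast
  qed
  then show ?thesis by blast
qed

text \<open>For an affine map f z = \<alpha> z + \<beta> cnj z + \<gamma> restricted to the face T one computes
  beltrami_residual w m T f = -4 i Area(T) (\<beta> - m \<alpha>), so its vanishing is the Beltrami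
  equation f_zbar = m f_z on T.\<close>

definition beltrami_residual ::
    "('n \<Rightarrow> complex) \<Rightarrow> complex \<Rightarrow> 'n face \<Rightarrow> ('n \<Rightarrow> complex) \<Rightarrow> complex" where
  "beltrami_residual w m T f = (case T of (i, j, k) \<Rightarrow>
      f i * ((w k - w j) + m * cnj (w k - w j))
    + f j * ((w i - w k) + m * cnj (w i - w k))
    + f k * ((w j - w i) + m * cnj (w j - w i)))"

lemma face_energy_eq:
  assumes area: "tri_area w T \<noteq> 0" and m: "cmod m \<le> 1"
  shows "tri_area w T * sqnorm2 (Pmat m (pl_grad w T (\<lambda>x. Re (f x)))
      + Jrot (Pmat m (pl_grad w T (\<lambda>x. Im (f x)))))
    = (cmod (beltrami_residual w m T f))\<^sup>2 / (4 * tri_area w T * (1 - (cmod m)\<^sup>2))"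
proof -
  obtain i j k where T: "T = (i, j, k)" by (cases T)
  define c where "c = 1 / sqrt (1 - (cmod m)\<^sup>2)"
  define A where "A = tri_area w T"
  define L where "L = beltrami_residual w m T f"
  let ?G = "Pmat m (pl_grad w T (\<lambda>x. Re (f x))) + Jrot (Pmat m (pl_grad w T (\<lambda>x. Im (f x))))"
  have "?G = (- c * Im L / (2 * A), c * Re L / (2 * A))"
    using area unfolding T c_def A_def L_def
    by (simp add: pl_grad_def Pmat_def Jrot_def Let_def beltrami_residual_def field_simps algebra_simps)
  then have "A * sqnorm2 ?G = c\<^sup>2 * (cmod L)\<^sup>2 / (4 * A)"
    using area unfolding A_def sqnorm2_def cmod_power2
    by (simp add: power_divide power_mult_distrib power2_eq_square field_simps)
  moreover have "(cmod m)\<^sup>2 \<le> 1"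
    using m by (simp add: power_le_one)
  then have "c\<^sup>2 = 1 / (1 - (cmod m)\<^sup>2)"
    unfolding c_def by (simp add: power_divide)
  ultimately show ?thesis
    unfolding A_def L_def by simp
qed

lemma E_QC_eq_0_iff:
  assumes area: "\<forall>T\<in>F. tri_area w T > 0" and beltrami: "\<forall>T\<in>F. cmod (mu T) < 1"
    and "finite F"
  shows "E_QC w F mu (\<lambda>x. Re (f x)) (\<lambda>x. Im (f x)) = 0
    \<longleftrightarrow> (\<forall>T\<in>F. beltrami_residual w (mu T) T f = 0)"
proof -
  define e where "e T = (cmod (beltrami_residual w (mu T) T f))\<^sup>2
    / (4 * tri_area w T * (1 - (cmod (mu T))\<^sup>2))" for T
  have e_eq_0_iff: "e T = 0 \<longleftrightarrow> beltrami_residual w (mu T) T f = 0" and e_nonneg: "e T \<ge> 0"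
    if "T \<in> F" for T
  proof -
    have "0 < tri_area w T" using area that by blast
    moreover have "(cmod (mu T))\<^sup>2 < 1" using beltrami that by (simp add: power_less_one_iff)
    ultimately have "0 < 4 * tri_area w T * (1 - (cmod (mu T))\<^sup>2)" by simp
    then show "e T = 0 \<longleftrightarrow> beltrami_residual w (mu T) T f = 0" "e T \<ge> 0"
      unfolding e_def by auto
  qed
  have "tri_area w T * sqnorm2 (Pmat (mu T) (pl_grad w T (\<lambda>x. Re (f x)))
      + Jrot (Pmat (mu T) (pl_grad w T (\<lambda>x. Im (f x))))) = e T" if "T \<in> F" for T
    using face_energy_eq[of w T "mu T" f] area beltrami that unfolding e_def by fastforce
  then have "E_QC w F mu (\<lambda>x. Re (f x)) (\<lambda>x. Im (f x)) = sum e F / 2"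
    unfolding E_QC_def by simp
  then have "E_QC w F mu (\<lambda>x. Re (f x)) (\<lambda>x. Im (f x)) = 0 \<longleftrightarrow> sum e F = 0"
    by linarith
  also have "\<dots> \<longleftrightarrow> (\<forall>T\<in>F. e T = 0)"
    using sum_nonneg_eq_0_iff[OF \<open>finite F\<close>] e_nonneg by blast
  also have "\<dots> \<longleftrightarrow> (\<forall>T\<in>F. beltrami_residual w (mu T) T f = 0)"
    using e_eq_0_iff by blast
  finally show ?thesis .
qed

lemma finite_face_verts [simp]: "finite (face_verts T)"
  by (cases T) (simp add: face_verts_def)

lemma beltrami_residual_affine:
  "beltrami_residual w m T (\<lambda>x. a * f x + b * g x + c)
     = a * beltrami_residual w m T f + b * beltrami_residual w m T g"
  by (cases T) (simp add: beltrami_residual_def algebra_simps)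

lemma add_mult_cnj_nonzero:
  assumes "z \<noteq> 0" and "cmod m < 1"
  shows "z + m * cnj z \<noteq> 0"
proof
  assume "z + m * cnj z = 0"
  then have "cmod z = cmod m * cmod z"
    by (metis add_eq_0_iff complex_mod_cnj norm_minus_cancel norm_mult)
  with assms show False by simp
qed

lemma tri_area_nonzero_imp_distinct:
  assumes "tri_area w (i, j, k) \<noteq> 0"
  shows "w i \<noteq> w j" "w j \<noteq> w k" "w k \<noteq> w i"
  using assms by (auto simp: tri_area_def algebra_simps)

lemma beltrami_residual_zero_imp_vanish_on_face:
  assumes area: "tri_area w T \<noteq> 0" and m: "cmod m < 1"
    and residual: "beltrami_residual w m T f = 0"
    and two: "2 \<le> card {x \<in> face_verts T. f x = 0}"
  shows "\<forall>x\<in>face_verts T. f x = 0"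
proof -
  obtain i j k where T: "T = (i, j, k)" by (cases T)
  let ?Z = "{x \<in> face_verts T. f x = 0}"
  have "\<exists>x\<in>?Z. \<exists>y\<in>?Z. x \<noteq> y"
    using two card_le_Suc0_iff_eq[of ?Z] by (auto simp: T face_verts_def)
  then obtain x y where "x \<noteq> y" "x \<in> {i, j, k}" "y \<in> {i, j, k}" "f x = 0" "f y = 0"
    by (auto simp: T face_verts_def)
  then have "(f i = 0 \<and> f j = 0) \<or> (f j = 0 \<and> f k = 0) \<or> (f k = 0 \<and> f i = 0)" by auto
  moreover have "(w k - w j) + m * cnj (w k - w j) \<noteq> 0" "(w i - w k) + m * cnj (w i - w k) \<noteq> 0"
      "(w j - w i) + m * cnj (w j - w i) \<noteq> 0"
    using tri_area_nonzero_imp_distinct[OF area[unfolded T]] m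
    by - (rule add_mult_cnj_nonzero; simp)+
  ultimately show ?thesis
    using residual by (auto simp: T face_verts_def beltrami_residual_def)
qed

abbreviation face_adj_rel :: "'n face set \<Rightarrow> 'n face rel" where
  "face_adj_rel F \<equiv> {(A, B). A \<in> F \<and> B \<in> F \<and> face_adj A B}"

lemma beltrami_solution_vanishing_propagates:
  assumes area: "\<forall>T\<in>F. tri_area w T > 0" and beltrami: "\<forall>T\<in>F. cmod (mu T) < 1"
    and solution: "\<forall>T\<in>F. beltrami_residual w (mu T) T f = 0"
    and path: "(T, T') \<in> (face_adj_rel F)\<^sup>*"
    and vanish: "\<forall>x\<in>face_verts T. f x = 0"
  shows "\<forall>x\<in>face_verts T'. f x = 0"
  using path
proof (induction rule: rtrancl_induct)
  case base
  show ?case using vanish .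
next
  case (step B C)
  then have "C \<in> F" and "face_adj B C" by auto
  have "card (face_verts B \<inter> face_verts C) \<le> card {x \<in> face_verts C. f x = 0}"
    using step.IH by (intro card_mono) auto
  then have "2 \<le> card {x \<in> face_verts C. f x = 0}"
    using \<open>face_adj B C\<close> unfolding face_adj_def by linarith
  then show ?case
    using beltrami_residual_zero_imp_vanish_on_face[of w C "mu C" f]
      area beltrami solution \<open>C \<in> F\<close> by fastforce
qed

lemma beltrami_solution_eq_0_if_vanishes_on_edge:
  assumes area: "\<forall>T\<in>F. tri_area w T > 0" and beltrami: "\<forall>T\<in>F. cmod (mu T) < 1"
    and cover: "\<forall>x. \<exists>T\<in>F. x \<in> face_verts T"
    and connected: "\<forall>T\<in>F. \<forall>T'\<in>F. (T, T') \<in> (face_adj_rel F)\<^sup>*"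
    and solution: "\<forall>T\<in>F. beltrami_residual w (mu T) T f = 0"
    and face: "(p, q, r) \<in> F" and "f p = 0" "f q = 0"
  shows "f = (\<lambda>_. 0)"
proof
  fix x
  have "p \<noteq> q" using tri_area_nonzero_imp_distinct(1)[of w p q r] area face by force
  have "card {p, q} \<le> card {y \<in> face_verts (p, q, r). f y = 0}"
    using \<open>f p = 0\<close> \<open>f q = 0\<close> by (intro card_mono) (auto simp: face_verts_def)
  then have "2 \<le> card {y \<in> face_verts (p, q, r). f y = 0}"
    using \<open>p \<noteq> q\<close> by simp
  then have "\<forall>y\<in>face_verts (p, q, r). f y = 0"
    using beltrami_residual_zero_imp_vanish_on_face[of w "(p, q, r)" "mu (p, q, r)" f]
      area beltrami solution face by fastforce
  moreover obtain T where "T \<in> F" "x \<in> face_verts T"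
    using cover by blast
  ultimately show "f x = 0"
    using beltrami_solution_vanishing_propagates[OF area beltrami solution] connected face by blast
qed

theorem theorem4p1:
  fixes w :: "'n::finite \<Rightarrow> complex"
    and F :: "'n face set"
    and mu :: "'n face \<Rightarrow> complex"
  assumes mesh: "planar_mesh w F"
    and beltrami: "\<forall>T\<in>F. cmod (mu T) < 1"
  shows "\<exists>f0 :: 'n \<Rightarrow> complex.
           {f :: 'n \<Rightarrow> complex. E_QC w F mu (\<lambda>j. Re (f j)) (\<lambda>j. Im (f j)) = 0}
             = {(\<lambda>j. a * f0 j + b) | a b. True}"
proof -
  have area: "\<forall>T\<in>F. tri_area w T > 0"
    and cover: "\<forall>x. \<exists>T\<in>F. x \<in> face_verts T"
    and connected: "\<forall>T\<in>F. \<forall>T'\<in>F. (T, T') \<in> (face_adj_rel F)\<^sup>*"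
    using mesh by (simp_all add: planar_mesh_def)
  obtain p q r where face: "(p, q, r) \<in> F"
    using cover by (metis prod_cases3)
  let ?S = "{f. \<forall>T\<in>F. beltrami_residual w (mu T) T f = 0}"
  have "{f. E_QC w F mu (\<lambda>j. Re (f j)) (\<lambda>j. Im (f j)) = 0} = ?S"
    using E_QC_eq_0_iff[OF area beltrami] by simp
  moreover have "\<exists>f0. ?S = {(\<lambda>j. a * f0 j + b) | a b. True}"
  proof (rule ex_generator_if_determined_by_two_values)
    show "(\<lambda>x. a * f x + b * g x + c) \<in> ?S" if "f \<in> ?S" "g \<in> ?S" for f g a b c
      using that by (simp add: beltrami_residual_affine)
    have "(\<lambda>_. 0) \<in> ?S"
      by (simp add: beltrami_residual_def split: prod.split)
    then show "?S \<noteq> {}" by blast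
    show "f = (\<lambda>_. 0)" if "f \<in> ?S" "f p = 0" "f q = 0" for f
      using beltrami_solution_eq_0_if_vanishes_on_edge[OF area beltrami cover connected _ face] that
      by simp
  qed
  ultimately show ?thesis by simp
qed

end
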